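(* Let $G=(V,D,B)$ be a mixed graph on $n$ nodes with covariance matrix $\Sigma=\phi_G(\Lambda,\Omega)=(I-\Lambda)^{-T}\Omega(I-\Lambda)^{-1}$. Let $S=\{s_1,\dots,s_k\}$ and $T=\{t_1,\dots,t_k\}\subset V$, and for every $1\le i\le k$ let $H_i=\{h^i_1,\dots,h^i_{\ell_i}\}\subset\mathrm{pa}(s_i)$. Suppose there exists a half-trek system from $S$ to $T$ with no sided intersection. Then the $k\times k$ matrix $A$ with entries $$A_{ij}=\Sigma_{s_it_j}-\sum_{m=1}^{\ell_i}\Sigma_{h^i_mt_j}\lambda_{h^i_ms_i}$$ is generically invertible, i.e. $\det A$ is not identically zero as a function of $(\Lambda,\Omega)$ (so $\det A\neq 0$ for all parameters outside a proper algebraic subset of the parameter space).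
   Context: A mixed graph $G=(V,D,B)$ has directed edges $D$ ($v\to w$) and symmetric bidirected edges $B$ ($v\leftrightarrow w$), no self-loops; $\mathrm{pa}(v)=\{w:w\to v\in G\}$. Parameters: $\Lambda=(\lambda_{uv})$ real (or indeterminate) supported on $D$ with $I-\Lambda$ invertible, $\Omega$ positive definite with $\omega_{uv}=0$ for $u\ne v$ unless $u\leftrightarrow v\in G$. A path is a sequence of edges (directed edges may be traversed in either direction, vertices may repeat). A trek from $v$ to $w$ is a path of the form $v=v^L_l\leftarrow\cdots\leftarrow v^L_0\leftrightarrow v^R_0\to\cdots\to v^R_r=w$ (Left side $\{v^L_0,\dots,v^L_l\}$, Right side $\{v^R_0,\dots,v^R_r\}$) or $v=v^L_l\leftarrow\cdots\leftarrow v^L_1\leftarrow v^T\to v^R_1\to\cdots\to v^R_r=w$ (Left side $\{v^T,v^L_1,\dots,v^L_l\}$, Right side $\{v^T,v^R_1,\dots,v^R_r\}$), possibly empty. A half-trek is a trek whose Left side has exactly one vertex. A half-trek system from $S$ to $T$ is a collection of half-treks with set of sources $S$ and set of targets $T$; it has no sided intersection if distinct half-treks have disjoint Left sides and disjoint Right sides. *)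

theory Defs
  imports "HOL-Analysis.Analysis"
begin

definition mixed_graph :: "('n \<times> 'n) set \<Rightarrow> ('n \<times> 'n) set \<Rightarrow> bool" where
  "mixed_graph D B \<longleftrightarrow> sym B \<and> (\<forall>v. (v, v) \<notin> D) \<and> (\<forall>v. (v, v) \<notin> B)"

definition pa :: "('n \<times> 'n) set \<Rightarrow> 'n \<Rightarrow> 'n set" where
  "pa D v = {w. (w, v) \<in> D}"

definition dir_walk :: "('n \<times> 'n) set \<Rightarrow> 'n list \<Rightarrow> bool" where
  "dir_walk D xs \<longleftrightarrow> xs \<noteq> [] \<and> (\<forall>i. Suc i < length xs \<longrightarrow> (xs ! i, xs ! Suc i) \<in> D)"

text \<open>A trek is represented as (L, b, R) where L = [vL0, ..., vLl] and R = [vR0, ..., vRr]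
are directed walks going away from the top.  If b, the top is a bidirected edge vL0 <-> vR0;
if not b, the top is a single vertex vT = vL0 = vR0.  The trivial (empty) trek is ([v], False, [v]).\<close>

type_synonym 'n trek = "'n list \<times> bool \<times> 'n list"

definition is_trek :: "('n \<times> 'n) set \<Rightarrow> ('n \<times> 'n) set \<Rightarrow> 'n trek \<Rightarrow> bool" where
  "is_trek D B \<pi> = (case \<pi> of (L, b, R) \<Rightarrow>
      dir_walk D L \<and> dir_walk D R \<and> (if b then (hd L, hd R) \<in> B else hd L = hd R))"

definition trek_source :: "'n trek \<Rightarrow> 'n" where
  "trek_source \<pi> = last (fst \<pi>)"

definition trek_target :: "'n trek \<Rightarrow> 'n" where
  "trek_target \<pi> = last (snd (snd \<pi>))"

definition left_side :: "'n trek \<Rightarrow> 'n set" where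
  "left_side \<pi> = set (fst \<pi>)"

definition right_side :: "'n trek \<Rightarrow> 'n set" where
  "right_side \<pi> = set (snd (snd \<pi>))"

definition is_half_trek :: "('n \<times> 'n) set \<Rightarrow> ('n \<times> 'n) set \<Rightarrow> 'n trek \<Rightarrow> bool" where
  "is_half_trek D B \<pi> \<longleftrightarrow> is_trek D B \<pi> \<and> card (left_side \<pi>) = 1"

definition half_trek_system_nsi ::
  "('n \<times> 'n) set \<Rightarrow> ('n \<times> 'n) set \<Rightarrow> 'n set \<Rightarrow> 'n set \<Rightarrow> 'n trek set \<Rightarrow> bool" where
  "half_trek_system_nsi D B S T P \<longleftrightarrow>
     (\<forall>\<pi>\<in>P. is_half_trek D B \<pi>) \<and>
     trek_source ` P = S \<and> trek_target ` P = T \<and>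
     (\<forall>\<pi>1\<in>P. \<forall>\<pi>2\<in>P. \<pi>1 \<noteq> \<pi>2 \<longrightarrow>
        left_side \<pi>1 \<inter> left_side \<pi>2 = {} \<and> right_side \<pi>1 \<inter> right_side \<pi>2 = {})"

definition pos_def_mat :: "real^'n^'n \<Rightarrow> bool" where
  "pos_def_mat M \<longleftrightarrow> transpose M = M \<and> (\<forall>x. x \<noteq> 0 \<longrightarrow> x \<bullet> (M *v x) > 0)"

definition params :: "('n \<times> 'n) set \<Rightarrow> ('n \<times> 'n) set \<Rightarrow> real^'n^'n \<Rightarrow> real^'n^'n \<Rightarrow> bool" where
  "params D B \<Lambda> \<Omega> \<longleftrightarrow>
     (\<forall>u v. \<Lambda> $ u $ v \<noteq> 0 \<longrightarrow> (u, v) \<in> D) \<and> invertible (mat 1 - \<Lambda>) \<and>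
     pos_def_mat \<Omega> \<and> (\<forall>u v. u \<noteq> v \<and> \<Omega> $ u $ v \<noteq> 0 \<longrightarrow> (u, v) \<in> B)"

definition phi :: "real^'n^'n \<Rightarrow> real^'n^'n \<Rightarrow> real^'n^'n" where
  "phi \<Lambda> \<Omega> = transpose (matrix_inv (mat 1 - \<Lambda>)) ** \<Omega> ** matrix_inv (mat 1 - \<Lambda>)"

end

theory Submission
  imports Defs
begin

text \<open>A determinant that is a rational function of (\<Lambda>, \<Omega>) is not identically zero as soon
  as it is nonzero at one parameter point, so we construct such a point.  Store each half-trek as
  its Right side R i, a directed walk starting at s i or at a bidirected neighbour of s i.  A
  half-trek system of minimal total length has walks without repeated vertices, and the relation
  "the half-trek of i starts with a bidirected edge and s i lies on the walk of m" is acyclic: a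
  cycle could be rerouted into a shorter system.  Let \<Lambda> be the 0/1 matrix of the walk edges,
  so that (I - \<Lambda>)\<inverse> is the 0/1 reachability matrix along the walks, and let \<Omega> be the identity
  plus a small covariance on the bidirected edges where half-treks start.  Then every entry of A
  is a sum of nonnegative terms; the entry in row i and the column of the target of walk i is
  positive, and the entry in row i and the column of the target of walk j vanishes unless j = i or
  j has smaller rank, where half-treks are ranked first by how many walks they reach in the acyclic
  relation and then by the position of their source on its walk.  So A is triangular up to a
  permutation of its columns.\<close>

section \<open>Walks, permutations and matrices\<close>

lemma dir_walk_drop:
  assumes "dir_walk D xs" "p < length xs"
  shows "dir_walk D (drop p xs)"
  using assms by (auto simp: dir_walk_def)

lemma dir_walk_shortcut:
  assumes walk: "dir_walk D xs" and ac: "a < c" "c < length xs" "xs ! a = xs ! c"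
  shows "dir_walk D (take a xs @ drop c xs)" (is "dir_walk D ?ys")
  unfolding dir_walk_def
proof (intro conjI allI impI)
  show "?ys \<noteq> []" using ac by simp
  fix i assume i: "Suc i < length ?ys"
  have nth_ys: "?ys ! k = (if k < a then xs ! k else xs ! (c + (k - a)))" if "k < length ?ys" for k
    using that ac by (simp add: nth_append)
  have step: "(xs ! k, xs ! Suc k) \<in> D" if "Suc k < length xs" for k
    using walk that by (simp add: dir_walk_def)
  consider "Suc i < a" | "Suc i = a" | "a \<le> i" by linarith
  then show "(?ys ! i, ?ys ! Suc i) \<in> D"
  proof cases
    case 3
    then have "Suc (c + (i - a)) < length xs" using i ac by simp
    then show ?thesis using 3 step nth_ys[of i] nth_ys[of "Suc i"] i by (simp add: Suc_diff_le)
  qed (use ac step[of i] nth_ys[of i] nth_ys[of "Suc i"] i in simp_all)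
qed

lemma dir_walk_remove_cycle:
  assumes walk: "dir_walk D xs" and "\<not> distinct xs"
  obtains ys where "dir_walk D ys" "hd ys = hd xs" "last ys = last xs"
    "set ys \<subseteq> set xs" "length ys < length xs"
proof -
  obtain a c where ac: "a < c" "c < length xs" "xs ! a = xs ! c"
  proof -
    obtain a c where "a < length xs" "c < length xs" "a \<noteq> c" "xs ! a = xs ! c"
      using \<open>\<not> distinct xs\<close> by (auto simp: distinct_conv_nth)
    then show thesis using that[of a c] that[of c a] by (metis linorder_neqE_nat)
  qed
  define ys where "ys = take a xs @ drop c xs"
  have "xs \<noteq> []" using ac by auto
  then have "hd ys = hd xs"
    using ac by (cases a) (simp_all add: ys_def hd_drop_conv_nth hd_conv_nth nth_append)
  moreover have "set ys \<subseteq> set xs"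
    unfolding ys_def using set_take_subset set_drop_subset by fastforce
  ultimately show thesis
    using dir_walk_shortcut[OF walk ac] ac that by (simp add: ys_def)
qed

lemma single_valued_cycle_permutes:
  assumes sv: "single_valued G" and cyc: "(i, i) \<in> G\<^sup>+"
    and fin: "finite {j. (i, j) \<in> G\<^sup>*}"
  obtains h where "h permutes {j. (i, j) \<in> G\<^sup>*}" "\<And>j. (i, j) \<in> G\<^sup>* \<Longrightarrow> (j, h j) \<in> G"
proof -
  define C where "C = {j. (i, j) \<in> G\<^sup>*}"
  have returns: "(j, i) \<in> G\<^sup>+" if "(i, j) \<in> G\<^sup>*" for j
    using that
  proof (induction rule: rtrancl_induct)
    case (step y z)
    obtain w where w: "(y, w) \<in> G" "(w, i) \<in> G\<^sup>*" using tranclD[OF step.IH] by blast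
    have "z = w" using sv step.hyps(2) w(1) by (rule single_valuedD)
    with w(2) have "(z, i) \<in> G\<^sup>*" by simp
    then show ?case using cyc by (cases "z = i") (auto dest: rtranclD)
  qed (rule cyc)
  have unique_succ: "\<exists>!m. (j, m) \<in> G" if "j \<in> C" for j
  proof -
    have "(j, i) \<in> G\<^sup>+" using returns that by (simp add: C_def)
    then obtain m where "(j, m) \<in> G" by (blast dest: tranclD)
    with sv show ?thesis by (auto dest: single_valuedD)
  qed
  define h where "h j = (if j \<in> C then THE m. (j, m) \<in> G else j)" for j
  have hG: "(j, h j) \<in> G" if "j \<in> C" for j
    using theI'[OF unique_succ[OF that]] that by (simp add: h_def)
  have "h ` C = C"
  proof
    show "h ` C \<subseteq> C" using hG by (auto simp: C_def intro: rtrancl_into_rtrancl)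
    show "C \<subseteq> h ` C"
    proof
      fix j assume "j \<in> C"
      then have "(i, j) \<in> G\<^sup>+" using cyc by (cases "j = i") (auto simp: C_def dest: rtranclD)
      then obtain z where z: "(i, z) \<in> G\<^sup>*" "(z, j) \<in> G" by (blast dest: tranclD2)
      then have "z \<in> C" by (simp add: C_def)
      have "h z = j" using sv hG[OF \<open>z \<in> C\<close>] z(2) by (rule single_valuedD)
      with \<open>z \<in> C\<close> show "j \<in> h ` C" by blast
    qed
  qed
  then have "bij_betw h C C"
    using fin unfolding C_def[symmetric] by (simp add: bij_betw_def eq_card_imp_inj_on)
  then have "h permutes C" by (rule bij_imp_permutes) (simp add: h_def)
  then show thesis using hG by (intro that) (simp_all add: C_def)
qed

lemma permutation_descending_is_id:
  fixes f :: "'a \<Rightarrow> nat"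
  assumes "finite A" "q permutes A" "\<And>i. q i = i \<or> f (q i) < f i"
  shows "q = id"
proof (rule ccontr)
  assume "q \<noteq> id"
  then obtain i0 where "q i0 \<noteq> i0" by (auto simp: fun_eq_iff)
  then have "i0 \<in> A" using assms(2) by (meson permutes_not_in)
  have "(\<Sum>i\<in>A. f (q i)) < (\<Sum>i\<in>A. f i)"
  proof (rule sum_strict_mono_ex1)
    show "\<forall>i\<in>A. f (q i) \<le> f i" by (metis assms(3) le_refl less_imp_le)
    show "\<exists>i\<in>A. f (q i) < f i" using assms(3) \<open>q i0 \<noteq> i0\<close> \<open>i0 \<in> A\<close> by blast
  qed (rule assms(1))
  moreover have "(\<Sum>i\<in>A. f (q i)) = (\<Sum>i\<in>A. f i)"
    using sum.permute[OF assms(2), of f] by (simp add: comp_def)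
  ultimately show False by simp
qed

lemma det_nonzero_if_triangular_after_permutation:
  fixes A :: "'a::idom^'k^'k" and f :: "'k \<Rightarrow> nat"
  assumes \<tau>: "\<tau> permutes UNIV"
    and support: "\<And>i j. A$i$\<tau> j \<noteq> 0 \<Longrightarrow> j = i \<or> f j < f i"
    and diag: "\<And>i. A$i$\<tau> i \<noteq> 0"
  shows "det A \<noteq> 0"
proof -
  have other_terms_vanish: "prod (\<lambda>i. A$i$p i) UNIV = 0" if p: "p permutes UNIV" "p \<noteq> \<tau>" for p
  proof (rule ccontr)
    assume "prod (\<lambda>i. A$i$p i) UNIV \<noteq> 0"
    then have "A$i$\<tau> ((inv \<tau> \<circ> p) i) \<noteq> 0" for i
      using \<tau> by (simp add: permutes_inverses)
    then have "(inv \<tau> \<circ> p) i = i \<or> f ((inv \<tau> \<circ> p) i) < f i" for i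
      using support by blast
    moreover have "inv \<tau> \<circ> p permutes UNIV"
      using p(1) permutes_inv[OF \<tau>] by (rule permutes_compose)
    ultimately have "inv \<tau> \<circ> p = id"
      by (intro permutation_descending_is_id[of UNIV _ f]) simp_all
    then have "p = \<tau>"
      using permutes_inv_o(1)[OF \<tau>] by (metis comp_id id_comp o_assoc)
    with p(2) show False by simp
  qed
  then have "det A = of_int (sign \<tau>) * prod (\<lambda>i. A$i$\<tau> i) UNIV"
    unfolding det_def using \<tau>
    by (subst sum.remove[where x=\<tau>])
      (auto simp: finite_permutations other_terms_vanish intro!: sum.neutral)
  then show ?thesis using diag by (simp add: sign_def)
qed

lemma pos_def_if_diagonally_dominant:
  fixes Q :: "real^'n^'n" and c :: real and x :: "real^'n"
  assumes diag: "\<And>u. Q$u$u = 1" and off: "\<And>u v. u \<noteq> v \<Longrightarrow> \<bar>Q$u$v\<bar> \<le> c"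
    and "c \<ge> 0" and "c * real CARD('n) < 1" and "x \<noteq> 0"
  shows "x \<bullet> (Q *v x) > 0"
proof -
  define S where "S = (\<Sum>u\<in>UNIV. (x$u)^2)"
  have term_bound: "of_bool (u = v) * (x$u)^2 - c * ((x$u)^2 + (x$v)^2) / 2 \<le> x$u * Q$u$v * x$v"
    for u v
  proof (cases "u = v")
    case False
    have "\<bar>x$u * Q$u$v * x$v\<bar> = \<bar>Q$u$v\<bar> * (\<bar>x$u\<bar> * \<bar>x$v\<bar>)"
      by (simp add: abs_mult)
    also have "\<dots> \<le> c * (\<bar>x$u\<bar> * \<bar>x$v\<bar>)"
      using off[OF False] by (rule mult_right_mono) simp
    also have "\<dots> \<le> c * (((x$u)^2 + (x$v)^2) / 2)"
      using sum_squares_bound[of "\<bar>x$u\<bar>" "\<bar>x$v\<bar>"] \<open>c \<ge> 0\<close>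
      by (intro mult_left_mono) (simp_all add: power2_abs)
    finally show ?thesis using False by (simp add: abs_le_iff)
  qed (use diag \<open>c \<ge> 0\<close> in \<open>simp add: power2_eq_square\<close>)
  have diagonal: "(\<Sum>u\<in>UNIV. \<Sum>v\<in>UNIV. of_bool (u = v) * (x$u)^2) = S"
    by (simp add: S_def)
  have pairs: "(\<Sum>u\<in>UNIV. \<Sum>v\<in>UNIV. (x$u)^2 + (x$v)^2) = 2 * real CARD('n) * S"
    by (simp add: S_def sum.distrib sum_distrib_left[symmetric])
  have "S - c * real CARD('n) * S
      = (\<Sum>u\<in>UNIV. \<Sum>v\<in>UNIV. of_bool (u = v) * (x$u)^2 - c * ((x$u)^2 + (x$v)^2) / 2)"
    unfolding sum_subtractf diagonal sum_divide_distrib[symmetric] sum_distrib_left[symmetric] pairs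
    by simp
  also have "\<dots> \<le> (\<Sum>u\<in>UNIV. \<Sum>v\<in>UNIV. x$u * Q$u$v * x$v)"
    by (intro sum_mono term_bound)
  also have "\<dots> = x \<bullet> (Q *v x)"
    by (simp add: inner_vec_def matrix_vector_mult_def sum_distrib_left mult.assoc)
  finally have lower: "S - c * real CARD('n) * S \<le> x \<bullet> (Q *v x)" .
  obtain u where "x$u \<noteq> 0" using \<open>x \<noteq> 0\<close> by (metis vec_eq_iff zero_index)
  then have "S > 0" unfolding S_def by (intro sum_pos2[of UNIV u]) simp_all
  then have "S - c * real CARD('n) * S > 0" using \<open>c * real CARD('n) < 1\<close> by simp
  with lower show ?thesis by linarith
qed

lemma matrix_inv_eq_right_inverse:
  fixes A A' :: "'a::field^'n^'n"
  assumes "A ** A' = mat 1"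
  shows "matrix_inv A = A'"
proof -
  have "A ** A' = mat 1 \<and> A' ** A = mat 1" using assms matrix_left_right_inverse by blast
  then have inverse: "A ** matrix_inv A = mat 1 \<and> matrix_inv A ** A = mat 1"
    unfolding matrix_inv_def by (rule someI)
  have "matrix_inv A = matrix_inv A ** (A ** A')" using assms by (simp add: matrix_mul_rid)
  also have "\<dots> = A'" using inverse by (simp add: matrix_mul_assoc matrix_mul_lid)
  finally show ?thesis .
qed

section \<open>Reducing a half-trek system\<close>

locale halftrek_sources =
  fixes D B :: "('n::finite \<times> 'n) set" and s t :: "'k::finite \<Rightarrow> 'n"
  assumes inj_s: "inj s"
begin

text \<open>b i says whether the half-trek from s i starts with a bidirected edge s i \<leftrightarrow> hd (R i);
  otherwise its top is s i = hd (R i).  R i is its Right side.\<close>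
definition walk_system :: "('k \<Rightarrow> bool) \<Rightarrow> ('k \<Rightarrow> 'n list) \<Rightarrow> bool" where
  "walk_system b R \<longleftrightarrow>
     (\<forall>i. dir_walk D (R i) \<and> last (R i) \<in> range t \<and>
        (if b i then (s i, hd (R i)) \<in> B else hd (R i) = s i)) \<and>
     (\<forall>i j. i \<noteq> j \<longrightarrow> set (R i) \<inter> set (R j) = {})"

definition system_size :: "('k \<Rightarrow> bool) \<Rightarrow> ('k \<Rightarrow> 'n list) \<Rightarrow> nat" where
  "system_size b R = (\<Sum>i\<in>UNIV. length (R i) + of_bool (b i))"

definition source_hits :: "('k \<Rightarrow> bool) \<Rightarrow> ('k \<Rightarrow> 'n list) \<Rightarrow> ('k \<times> 'k) set" where
  "source_hits b R = {(i, m). b i \<and> s i \<in> set (R m)}"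

lemma walk_system_of_half_trek_system:
  assumes "half_trek_system_nsi D B (range s) (range t) P"
  shows "\<exists>b R. walk_system b R"
proof -
  have "\<forall>i. \<exists>\<pi>\<in>P. trek_source \<pi> = s i"
    using assms unfolding half_trek_system_nsi_def by (metis imageE rangeI)
  then obtain \<pi> where \<pi>: "\<And>i. \<pi> i \<in> P" "\<And>i. trek_source (\<pi> i) = s i" by metis
  define b where "b i = fst (snd (\<pi> i))" for i
  define R where "R i = snd (snd (\<pi> i))" for i
  have "dir_walk D (R i) \<and> last (R i) \<in> range t \<and>
      (if b i then (s i, hd (R i)) \<in> B else hd (R i) = s i)" for i
  proof -
    obtain L c Rt where \<pi>i: "\<pi> i = (L, c, Rt)" by (cases "\<pi> i")
    have "is_half_trek D B (\<pi> i)" using assms \<pi>(1) by (simp add: half_trek_system_nsi_def)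
    then have "dir_walk D L" "dir_walk D Rt" "if c then (hd L, hd Rt) \<in> B else hd L = hd Rt"
      "card (set L) = 1"
      by (simp_all add: \<pi>i is_half_trek_def is_trek_def left_side_def)
    moreover have "L \<noteq> []" using \<open>dir_walk D L\<close> by (simp add: dir_walk_def)
    ultimately have "hd L = last L" by (metis card_1_singletonE hd_in_set last_in_set singletonD)
    moreover have "last L = s i" using \<pi>(2)[of i] by (simp add: \<pi>i trek_source_def)
    moreover have "last Rt \<in> range t"
      using assms \<pi>(1)[of i] unfolding half_trek_system_nsi_def trek_target_def
      by (metis \<pi>i imageI snd_conv)
    ultimately show ?thesis using \<open>dir_walk D Rt\<close> \<open>if c then _ else _\<close>
      by (simp add: b_def R_def \<pi>i split: if_splits)
  qed
  moreover have "set (R i) \<inter> set (R j) = {}" if "i \<noteq> j" for i j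
  proof -
    have "\<pi> i \<noteq> \<pi> j" using \<pi>(2) inj_s that by (metis injD)
    then show ?thesis
      using assms \<pi>(1) unfolding half_trek_system_nsi_def right_side_def R_def by blast
  qed
  ultimately show ?thesis unfolding walk_system_def by blast
qed

lemma walk_system_replace_walk:
  assumes "walk_system b R" "dir_walk D ys" "hd ys = hd (R i)" "last ys = last (R i)"
    "set ys \<subseteq> set (R i)"
  shows "walk_system b (R(i := ys))"
proof -
  have "dir_walk D ((R(i := ys)) k) \<and> last ((R(i := ys)) k) \<in> range t \<and>
      (if b k then (s k, hd ((R(i := ys)) k)) \<in> B else hd ((R(i := ys)) k) = s k)" for k
    using assms(1-4) by (cases "k = i") (simp_all add: walk_system_def)
  moreover have "set ((R(i := ys)) k) \<subseteq> set (R k)" for k using assms(5) by simp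
  ultimately show ?thesis using assms(1) unfolding walk_system_def by blast
qed

lemma shorter_system_if_walk_not_distinct:
  assumes "walk_system b R" "\<not> distinct (R i)"
  shows "\<exists>b' R'. walk_system b' R' \<and> system_size b' R' < system_size b R"
proof -
  have "dir_walk D (R i)" using assms(1) by (simp add: walk_system_def)
  then obtain ys where ys: "dir_walk D ys" "hd ys = hd (R i)" "last ys = last (R i)"
    "set ys \<subseteq> set (R i)" "length ys < length (R i)"
    using assms(2) by (rule dir_walk_remove_cycle)
  have "system_size b (R(i := ys)) < system_size b R"
    unfolding system_size_def using ys(5) by (intro sum_strict_mono_ex1) auto
  with walk_system_replace_walk[OF assms(1) ys(1-4)] show ?thesis by blast
qed

lemma walk_system_reroute:
  assumes system: "walk_system b R" and h: "h permutes C"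
    and p: "\<And>j. j \<in> C \<Longrightarrow> p j < length (R (h j)) \<and> R (h j) ! p j = s j"
  shows "walk_system (\<lambda>j. b j \<and> j \<notin> C) (\<lambda>j. if j \<in> C then drop (p j) (R (h j)) else R j)"
    (is "walk_system ?b' ?R'")
proof -
  have "dir_walk D (?R' j) \<and> last (?R' j) \<in> range t \<and>
      (if ?b' j then (s j, hd (?R' j)) \<in> B else hd (?R' j) = s j)" for j
  proof (cases "j \<in> C")
    case True
    have "dir_walk D (R (h j))" "last (R (h j)) \<in> range t"
      using system by (simp_all add: walk_system_def)
    with p[OF True] True show ?thesis by (simp add: dir_walk_drop hd_drop_conv_nth)
  next
    case False
    then show ?thesis using system by (simp add: walk_system_def)
  qed
  moreover have "set (?R' i) \<inter> set (?R' j) = {}" if "i \<noteq> j" for i j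
  proof -
    have "h i \<noteq> h j" using that permutes_inj[OF h] by (meson injD)
    then have "set (R (h i)) \<inter> set (R (h j)) = {}" using system by (simp add: walk_system_def)
    moreover have "set (?R' k) \<subseteq> set (R (h k))" for k
      using permutes_not_in[OF h] by (auto dest: in_set_dropD)
    ultimately show ?thesis by blast
  qed
  ultimately show ?thesis unfolding walk_system_def by blast
qed

text \<open>If the sources of the half-treks in C lie on the walks of a permutation of C,
  each of them can use the tail of that walk instead, dropping its bidirected edge.\<close>
lemma shorter_system_by_rerouting:
  assumes system: "walk_system b R" and h: "h permutes C" and "j0 \<in> C"
    and hits: "\<And>j. j \<in> C \<Longrightarrow> b j \<and> s j \<in> set (R (h j))"
  shows "\<exists>b' R'. walk_system b' R' \<and> system_size b' R' < system_size b R"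
proof -
  have "\<forall>j\<in>C. \<exists>q. q < length (R (h j)) \<and> R (h j) ! q = s j"
    using hits by (simp add: in_set_conv_nth)
  then obtain p where p: "\<And>j. j \<in> C \<Longrightarrow> p j < length (R (h j)) \<and> R (h j) ! p j = s j"
    by (metis bchoice)
  define R' where "R' j = (if j \<in> C then drop (p j) (R (h j)) else R j)" for j
  define b' where "b' j = (b j \<and> j \<notin> C)" for j
  define cost where "cost j = length (R j) + of_bool (b j)" for j
  have "system_size b' R' < (\<Sum>j\<in>UNIV. cost (h j))"
    unfolding system_size_def
  proof (rule sum_strict_mono_ex1)
    have less: "length (R' j) + of_bool (b' j) < cost (h j)" if "j \<in> C" for j
      using hits[OF permutes_in_image[OF h, THEN iffD2, OF that]] that
      by (simp add: R'_def b'_def cost_def)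
    have "length (R' j) + of_bool (b' j) \<le> cost (h j)" for j
      using less[of j] permutes_not_in[OF h, of j]
      by (cases "j \<in> C") (simp_all add: R'_def b'_def cost_def)
    then show "\<forall>j\<in>UNIV. length (R' j) + of_bool (b' j) \<le> cost (h j)" by blast
    show "\<exists>j\<in>UNIV. length (R' j) + of_bool (b' j) < cost (h j)"
      using less \<open>j0 \<in> C\<close> by blast
  qed simp
  also have "\<dots> = system_size b R"
    using sum.permute[OF permutes_subset[OF h subset_UNIV], of cost]
    by (simp add: system_size_def cost_def comp_def)
  finally show ?thesis
    using walk_system_reroute[OF system h p] unfolding R'_def b'_def by blast
qed

lemma single_valued_source_hits:
  assumes "walk_system b R"
  shows "single_valued (source_hits b R)"
  using assms unfolding single_valued_def source_hits_def walk_system_def by blast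

lemma shorter_system_if_cyclic:
  assumes system: "walk_system b R" and "\<not> acyclic (source_hits b R)"
  shows "\<exists>b' R'. walk_system b' R' \<and> system_size b' R' < system_size b R"
proof -
  obtain i where cycle: "(i, i) \<in> (source_hits b R)\<^sup>+" using assms(2) by (auto simp: acyclic_def)
  obtain h where h: "h permutes {j. (i, j) \<in> (source_hits b R)\<^sup>*}"
    and hits: "\<And>j. (i, j) \<in> (source_hits b R)\<^sup>* \<Longrightarrow> (j, h j) \<in> source_hits b R"
    by (rule single_valued_cycle_permutes[OF single_valued_source_hits[OF system] cycle])
      (simp, blast)
  show ?thesis
  proof (rule shorter_system_by_rerouting[OF system h])
    show "i \<in> {j. (i, j) \<in> (source_hits b R)\<^sup>*}" by simp
    show "b j \<and> s j \<in> set (R (h j))" if "j \<in> {j. (i, j) \<in> (source_hits b R)\<^sup>*}" for j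
      using hits that by (simp add: source_hits_def)
  qed
qed

lemma exists_reduced_walk_system:
  assumes "half_trek_system_nsi D B (range s) (range t) P"
  obtains b R where "walk_system b R" "\<And>i. distinct (R i)" "acyclic (source_hits b R)"
proof -
  obtain b R where "walk_system b R" using walk_system_of_half_trek_system[OF assms] by blast
  then obtain bR where system: "walk_system (fst bR) (snd bR)"
    and least: "\<forall>bR'. walk_system (fst bR') (snd bR') \<longrightarrow>
      system_size (fst bR) (snd bR) \<le> system_size (fst bR') (snd bR')"
    using ex_has_least_nat[of "\<lambda>bR. walk_system (fst bR) (snd bR)" "(b, R)"
        "\<lambda>bR. system_size (fst bR) (snd bR)"] by auto
  have minimal: "\<not> (\<exists>b' R'. walk_system b' R' \<and> system_size b' R' < system_size (fst bR) (snd bR))"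
    using least by (auto simp: not_less dest: spec[of _ "(b', R')" for b' R'])
  show thesis
  proof (rule that[OF system])
    show "distinct (snd bR i)" for i
      using minimal shorter_system_if_walk_not_distinct[OF system] by blast
    show "acyclic (source_hits (fst bR) (snd bR))"
      using minimal shorter_system_if_cyclic[OF system] by blast
  qed
qed

end

section \<open>The witness parameters\<close>

locale reduced_walk_system = halftrek_sources D B s t
  for D B :: "('n::finite \<times> 'n) set" and s t :: "'k::finite \<Rightarrow> 'n" +
  fixes b :: "'k \<Rightarrow> bool" and R :: "'k \<Rightarrow> 'n list"
  assumes system: "walk_system b R" and distinct_walk: "\<And>i. distinct (R i)"
    and acyclic_hits: "acyclic (source_hits b R)"
begin

(* keep 0/1-weighted sums in the shape of matrix products *)
declare sum_mult_of_bool_eq [simp del] sum_of_bool_mult_eq [simp del]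

lemma walk: "dir_walk D (R i)"
  and last_walk_in_targets: "last (R i) \<in> range t"
  and walk_start: "if b i then (s i, hd (R i)) \<in> B else hd (R i) = s i"
  using system unfolding walk_system_def by blast+

lemma walk_nonempty: "R i \<noteq> []"
  using walk by (simp add: dir_walk_def)

lemma walk_unique: "v \<in> set (R m) \<Longrightarrow> v \<in> set (R m') \<Longrightarrow> m = m'"
  using system unfolding walk_system_def by blast

lemma walk_position_unique:
  assumes "p < length (R m)" "p' < length (R m')" "R m ! p = R m' ! p'"
  shows "m = m' \<and> p = p'"
proof -
  have "m = m'" using assms walk_unique by (metis nth_mem)
  with assms distinct_walk show ?thesis by (simp add: nth_eq_iff_index_eq)
qed

lemma source_on_own_walk: "\<not> b i \<Longrightarrow> s i \<in> set (R i)"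
  using walk_start[of i] walk_nonempty[of i] by (metis hd_in_set)

lemma source_not_on_own_walk: "b i \<Longrightarrow> s i \<notin> set (R i)"
  using acyclic_hits by (auto simp: acyclic_def source_hits_def)

definition precedes :: "'n \<Rightarrow> 'n \<Rightarrow> bool" where
  "precedes u v \<longleftrightarrow> (\<exists>m p q. p < q \<and> q < length (R m) \<and> R m ! p = u \<and> R m ! q = v)"

definition walk_edge :: "'n \<Rightarrow> 'n \<Rightarrow> bool" where
  "walk_edge u v \<longleftrightarrow> (\<exists>m p. Suc p < length (R m) \<and> R m ! p = u \<and> R m ! Suc p = v)"

definition reaches :: "'n \<Rightarrow> 'n \<Rightarrow> bool" where
  "reaches u v \<longleftrightarrow> u = v \<or> precedes u v"

lemma precedes_irrefl: "\<not> precedes u u"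
  unfolding precedes_def using walk_position_unique by (metis less_trans nat_neq_iff)

lemma precedes_trans: "precedes u v \<Longrightarrow> precedes v w \<Longrightarrow> precedes u w"
  unfolding precedes_def using walk_position_unique by (metis less_trans)

lemma precedes_same_walk: "precedes u v \<Longrightarrow> u \<in> set (R m) \<Longrightarrow> v \<in> set (R m)"
  unfolding precedes_def using walk_unique by (metis less_trans nth_mem)

lemma reaches_same_walk: "reaches u v \<Longrightarrow> u \<in> set (R m) \<Longrightarrow> v \<in> set (R m)"
  unfolding reaches_def using precedes_same_walk by blast

lemma not_precedes_hd: "\<not> precedes u (hd (R m))"
  unfolding precedes_def using walk_position_unique walk_nonempty
  by (metis hd_conv_nth length_greater_0_conv less_nat_zero_code)

lemma walk_edge_precedes: "walk_edge u v \<Longrightarrow> precedes u v"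
  unfolding walk_edge_def precedes_def by (metis lessI)

lemma walk_edge_unique_succ: "walk_edge u v \<Longrightarrow> walk_edge u v' \<Longrightarrow> v = v'"
  unfolding walk_edge_def using walk_position_unique by (metis Suc_lessD)

lemma walk_edge_unique_pred: "walk_edge u v \<Longrightarrow> walk_edge u' v \<Longrightarrow> u = u'"
  unfolding walk_edge_def using walk_position_unique by (metis Suc_inject)

lemma reaches_after_walk_edge:
  assumes "walk_edge u z"
  shows "reaches u w \<longleftrightarrow> u = w \<or> reaches z w" and "reaches z w \<Longrightarrow> u \<noteq> w"
proof -
  obtain m p where edge: "Suc p < length (R m)" "R m ! p = u" "R m ! Suc p = z"
    using assms unfolding walk_edge_def by blast
  have "precedes u w \<longleftrightarrow> reaches z w"
  proof
    assume "precedes u w"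
    then obtain m' p' q where later: "p' < q" "q < length (R m')" "R m' ! p' = u" "R m' ! q = w"
      unfolding precedes_def by blast
    then have "m' = m" "p' = p" using edge walk_position_unique[of p' m' p m] by auto
    show "reaches z w"
    proof (cases "q = Suc p")
      case False
      then have "Suc p < q" using later(1) \<open>p' = p\<close> by simp
      then show ?thesis using edge later \<open>m' = m\<close> unfolding reaches_def precedes_def by blast
    qed (use edge later \<open>m' = m\<close> in \<open>simp add: reaches_def\<close>)
  next
    assume "reaches z w"
    then show "precedes u w"
      using walk_edge_precedes[OF assms] precedes_trans unfolding reaches_def by blast
  qed
  then show "reaches u w \<longleftrightarrow> u = w \<or> reaches z w" by (simp add: reaches_def)
  show "reaches z w \<Longrightarrow> u \<noteq> w"
    using walk_edge_precedes[OF assms] precedes_trans precedes_irrefl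
    unfolding reaches_def by blast
qed

lemma reaches_if_no_walk_edge: "\<nexists>z. walk_edge u z \<Longrightarrow> reaches u w \<longleftrightarrow> u = w"
  unfolding reaches_def precedes_def walk_edge_def by (metis Suc_lessI less_trans_Suc)

lemma reaches_via_walk_edge: "walk_edge h v \<Longrightarrow> reaches x h \<Longrightarrow> reaches x v"
  using walk_edge_precedes precedes_trans unfolding reaches_def by blast

lemma reaches_last_walk: "reaches y (last (R j)) \<Longrightarrow> y \<in> set (R j)"
proof -
  assume "reaches y (last (R j))"
  then consider "y = last (R j)" | "precedes y (last (R j))" unfolding reaches_def by blast
  then show ?thesis
  proof cases
    case 2
    then obtain m p q where "p < q" "q < length (R m)" "R m ! p = y" "R m ! q = last (R j)"
      unfolding precedes_def by blast
    moreover have "last (R j) \<in> set (R j)" using walk_nonempty by simp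
    ultimately show ?thesis using walk_unique by (metis nth_mem less_trans)
  qed (simp add: walk_nonempty)
qed

definition edge_matrix :: "real^'n^'n" where
  "edge_matrix = (\<chi> u v. of_bool (walk_edge u v))"

definition reach_matrix :: "real^'n^'n" where
  "reach_matrix = (\<chi> u v. of_bool (reaches u v))"

lemma sum_walk_edge_row:
  fixes g :: "'n \<Rightarrow> real"
  assumes "walk_edge u z"
  shows "(\<Sum>v\<in>UNIV. of_bool (walk_edge u v) * g v) = g z"
proof -
  have "(\<Sum>v\<in>UNIV. of_bool (walk_edge u v) * g v) = (\<Sum>v\<in>UNIV. if v = z then g v else 0)"
    using assms walk_edge_unique_succ by (intro sum.cong) auto
  then show ?thesis by simp
qed

lemma edge_matrix_inverse: "(mat 1 - edge_matrix) ** reach_matrix = mat 1"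
proof -
  have "(\<Sum>z\<in>UNIV. of_bool (walk_edge u z) * of_bool (reaches z w))
      = of_bool (reaches u w) - (of_bool (u = w) :: real)" for u w
  proof (cases "\<exists>z. walk_edge u z")
    case True
    then obtain z where z: "walk_edge u z" by blast
    then show ?thesis
      using reaches_after_walk_edge[OF z]
      by (cases "reaches z w") (auto simp: sum_walk_edge_row[OF z])
  qed (simp add: reaches_if_no_walk_edge)
  then show ?thesis
    by (simp add: vec_eq_iff matrix_matrix_mult_def mat_def edge_matrix_def reach_matrix_def
        left_diff_distrib sum_subtractf if_distrib[of "\<lambda>a. a * _"] cong: if_cong)
qed

definition bidirected_top :: "'n \<Rightarrow> 'n \<Rightarrow> bool" where
  "bidirected_top u v \<longleftrightarrow> (\<exists>m. b m \<and> {u, v} = {s m, hd (R m)})"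

text \<open>Unit variances, and a covariance small enough for positive definiteness on the
  bidirected edge that starts each half-trek.\<close>
definition error_cov :: "real^'n^'n" where
  "error_cov = (\<chi> u v. if u = v then 1 else if bidirected_top u v then 1 / (2 * CARD('n)) else 0)"

lemma params_witness:
  assumes "mixed_graph D B"
  shows "params D B edge_matrix error_cov"
  unfolding params_def
proof (intro conjI allI impI)
  fix u v
  show "(u, v) \<in> D" if nonzero: "edge_matrix $ u $ v \<noteq> 0"
  proof -
    obtain m p where "Suc p < length (R m)" "R m ! p = u" "R m ! Suc p = v"
      using nonzero by (auto simp: edge_matrix_def walk_edge_def)
    then show ?thesis using walk[of m] unfolding dir_walk_def by blast
  qed
  show "(u, v) \<in> B" if nonzero: "u \<noteq> v \<and> error_cov $ u $ v \<noteq> 0"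
  proof -
    obtain m where "b m" "{u, v} = {s m, hd (R m)}"
      using nonzero by (auto simp: error_cov_def bidirected_top_def split: if_splits)
    moreover have "sym B" using assms by (simp add: mixed_graph_def)
    ultimately show ?thesis using walk_start[of m] by (auto simp: doubleton_eq_iff dest: symD)
  qed
next
  show "invertible (mat 1 - edge_matrix)"
    using edge_matrix_inverse invertible_right_inverse by blast
  show "pos_def_mat error_cov"
    unfolding pos_def_mat_def
  proof (intro conjI allI impI)
    show "transpose error_cov = error_cov"
      by (simp add: vec_eq_iff transpose_def error_cov_def bidirected_top_def insert_commute)
    show "x \<bullet> (error_cov *v x) > 0" if "x \<noteq> 0" for x
      by (rule pos_def_if_diagonally_dominant[where c = "1 / (2 * CARD('n))"])
        (use that in \<open>simp_all add: error_cov_def\<close>)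
  qed
qed

lemma phi_entry:
  "phi edge_matrix error_cov $ a $ c
     = (\<Sum>y\<in>UNIV. \<Sum>x\<in>UNIV. of_bool (reaches x a) * error_cov $ x $ y * of_bool (reaches y c))"
  unfolding phi_def matrix_inv_eq_right_inverse[OF edge_matrix_inverse]
  by (simp add: matrix_matrix_mult_def transpose_def reach_matrix_def sum_distrib_right)

definition source_weight :: "'n set \<Rightarrow> 'n \<Rightarrow> 'n \<Rightarrow> real" where
  "source_weight H v x = of_bool (reaches x v \<and> \<not> (\<exists>h\<in>H. walk_edge h v \<and> reaches x h))"

lemma criterion_matrix_entry:
  "phi edge_matrix error_cov $ v $ c - (\<Sum>h\<in>H. phi edge_matrix error_cov $ h $ c * edge_matrix $ h $ v)
     = (\<Sum>y\<in>UNIV. \<Sum>x\<in>UNIV. source_weight H v x * error_cov $ x $ y * of_bool (reaches y c))"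
proof -
  have pred_sum: "(\<Sum>h\<in>H. of_bool (walk_edge h v) * of_bool (reaches x h))
      = (of_bool (\<exists>h\<in>H. walk_edge h v \<and> reaches x h) :: real)" for x
  proof (cases "\<exists>h\<in>H. walk_edge h v")
    case True
    then obtain h0 where "h0 \<in> H" "walk_edge h0 v" by blast
    then have "(\<Sum>h\<in>H. of_bool (walk_edge h v) * of_bool (reaches x h))
        = (\<Sum>h\<in>H. if h = h0 then of_bool (reaches x h0) else (0::real))"
      using walk_edge_unique_pred by (intro sum.cong) auto
    with \<open>h0 \<in> H\<close> \<open>walk_edge h0 v\<close> walk_edge_unique_pred show ?thesis by auto
  qed auto
  have weight: "source_weight H v x
      = of_bool (reaches x v) - (\<Sum>h\<in>H. of_bool (walk_edge h v) * of_bool (reaches x h))" for x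
    unfolding pred_sum source_weight_def using reaches_via_walk_edge by auto
  let ?term = "\<lambda>h x y. of_bool (walk_edge h v) * of_bool (reaches x h)
    * error_cov $ x $ y * of_bool (reaches y c) :: real"
  have "(\<Sum>h\<in>H. phi edge_matrix error_cov $ h $ c * edge_matrix $ h $ v)
      = (\<Sum>h\<in>H. \<Sum>y\<in>UNIV. \<Sum>x\<in>UNIV. ?term h x y)"
    unfolding phi_entry
    by (simp add: edge_matrix_def sum_distrib_left mult_ac)
  also have "\<dots> = (\<Sum>y\<in>UNIV. \<Sum>x\<in>UNIV. \<Sum>h\<in>H. ?term h x y)"
    by (subst sum.swap) (simp add: sum.swap[of _ H])
  also have "\<dots> = (\<Sum>y\<in>UNIV. \<Sum>x\<in>UNIV. (\<Sum>h\<in>H. of_bool (walk_edge h v) * of_bool (reaches x h))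
          * error_cov $ x $ y * of_bool (reaches y c))"
    by (simp add: sum_distrib_right)
  finally show ?thesis
    unfolding phi_entry weight by (simp add: left_diff_distrib sum_subtractf)
qed

definition hit_rank :: "'k \<Rightarrow> nat" where
  "hit_rank i = card {m. (i, m) \<in> (source_hits b R)\<^sup>+}"

lemma hit_rank_less:
  assumes "(i, m) \<in> source_hits b R"
  shows "hit_rank m < hit_rank i"
proof -
  have "{j. (m, j) \<in> (source_hits b R)\<^sup>+} \<subset> {j. (i, j) \<in> (source_hits b R)\<^sup>+}"
  proof
    show "{j. (m, j) \<in> (source_hits b R)\<^sup>+} \<subseteq> {j. (i, j) \<in> (source_hits b R)\<^sup>+}"
      using assms by (auto intro: trancl_into_trancl2)
    have "(m, m) \<notin> (source_hits b R)\<^sup>+" using acyclic_hits by (simp add: acyclic_def)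
    with assms show "{j. (m, j) \<in> (source_hits b R)\<^sup>+} \<noteq> {j. (i, j) \<in> (source_hits b R)\<^sup>+}"
      by blast
  qed
  then show ?thesis unfolding hit_rank_def by (rule psubset_card_mono[rotated]) simp
qed

lemma hit_rank_eq:
  assumes "(i, m) \<in> source_hits b R" "(j, m) \<in> source_hits b R"
  shows "hit_rank i = hit_rank j"
proof -
  have "{x. (k, x) \<in> (source_hits b R)\<^sup>+} = insert m {x. (m, x) \<in> (source_hits b R)\<^sup>+}"
    if "(k, m) \<in> source_hits b R" for k
  proof (intro equalityI subsetI)
    fix x assume "x \<in> {x. (k, x) \<in> (source_hits b R)\<^sup>+}"
    then obtain z where "(k, z) \<in> source_hits b R" "(z, x) \<in> (source_hits b R)\<^sup>*"
      by (auto dest: tranclD)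
    moreover have "z = m"
      using single_valued_source_hits[OF system] \<open>(k, z) \<in> _\<close> that by (rule single_valuedD)
    ultimately show "x \<in> insert m {x. (m, x) \<in> (source_hits b R)\<^sup>+}"
      by (auto dest: rtranclD)
  qed (use that in \<open>auto intro: trancl_into_trancl2\<close>)
  then show ?thesis using assms by (simp add: hit_rank_def)
qed

definition rank :: "'k \<Rightarrow> nat" where
  "rank i = hit_rank i * CARD('n) + card {u. precedes u (s i)}"

lemma card_predecessors_less: "card {u. precedes u v} < CARD('n)"
  using precedes_irrefl by (intro psubset_card_mono) auto

lemma rank_less_if_hit_rank_less:
  assumes "hit_rank j < hit_rank i"
  shows "rank j < rank i"
proof -
  have "rank j < (hit_rank j + 1) * CARD('n)"
    using card_predecessors_less by (simp add: rank_def)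
  also have "\<dots> \<le> hit_rank i * CARD('n)" using assms by (intro mult_right_mono) auto
  also have "\<dots> \<le> rank i" by (simp add: rank_def)
  finally show ?thesis .
qed

lemma rank_less_if_source_precedes:
  assumes "hit_rank j = hit_rank i" "precedes (s j) (s i)"
  shows "rank j < rank i"
proof -
  have "{u. precedes u (s j)} \<subset> {u. precedes u (s i)}"
    using assms(2) precedes_trans precedes_irrefl by blast
  then show ?thesis using assms(1) by (simp add: rank_def psubset_card_mono)
qed

lemma rank_less_if_source_on_walk:
  assumes "s i \<in> set (R j)"
  shows "j = i \<or> rank j < rank i"
proof (cases "j = i")
  case False
  then have "b i" using assms source_on_own_walk walk_unique by blast
  with assms have "(i, j) \<in> source_hits b R" by (simp add: source_hits_def)
  then show ?thesis using hit_rank_less rank_less_if_hit_rank_less by blast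
qed simp

lemma rank_less_if_source_reaches_source:
  assumes "b j" "reaches (s j) (s i)"
  shows "j = i \<or> rank j < rank i"
proof (cases "s j = s i")
  case True
  then show ?thesis using inj_s by (simp add: inj_eq)
next
  case False
  then have precedes: "precedes (s j) (s i)" using assms(2) by (simp add: reaches_def)
  then obtain m where on_m: "s j \<in> set (R m)" "s i \<in> set (R m)"
    unfolding precedes_def by (metis less_trans nth_mem)
  have "b i"
  proof (rule ccontr)
    assume "\<not> b i"
    then have "s i = hd (R i)" using walk_start[of i] by simp
    with precedes not_precedes_hd show False by metis
  qed
  then have "hit_rank i = hit_rank j"
    using on_m \<open>b j\<close> by (intro hit_rank_eq[of _ m]) (auto simp: source_hits_def)
  then show ?thesis using rank_less_if_source_precedes precedes by simp
qed

lemma rank_less_if_walk_start_reaches_source: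
  assumes "b m" "reaches (hd (R m)) (s i)" "s m \<in> set (R j)"
  shows "rank j < rank i"
proof -
  have "s i \<in> set (R m)" using reaches_same_walk[OF assms(2)] walk_nonempty by simp
  moreover have "m \<noteq> i" using \<open>b m\<close> calculation source_not_on_own_walk by blast
  ultimately have "b i" using source_on_own_walk walk_unique by blast
  then have "hit_rank m < hit_rank i"
    using \<open>s i \<in> set (R m)\<close> by (intro hit_rank_less) (simp add: source_hits_def)
  moreover have "hit_rank j < hit_rank m"
    using assms(1,3) by (intro hit_rank_less) (simp add: source_hits_def)
  ultimately show ?thesis using rank_less_if_hit_rank_less by simp
qed

lemma rank_decreases:
  assumes reach: "reaches x (s i)" and cov: "x = y \<or> bidirected_top x y" and y: "y \<in> set (R j)"
  shows "j = i \<or> rank j < rank i"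
proof (cases "x = y")
  case True
  then show ?thesis using reach y reaches_same_walk rank_less_if_source_on_walk by blast
next
  case False
  then obtain m where "b m" "{x, y} = {s m, hd (R m)}"
    using cov by (auto simp: bidirected_top_def)
  then consider "x = s m" "y = hd (R m)" | "x = hd (R m)" "y = s m"
    by (auto simp: doubleton_eq_iff)
  then show ?thesis
  proof cases
    case 1
    moreover have "hd (R m) \<in> set (R m)" using walk_nonempty by simp
    ultimately have "m = j" using y walk_unique by blast
    with 1 \<open>b m\<close> reach show ?thesis by (simp add: rank_less_if_source_reaches_source)
  next
    case 2
    with \<open>b m\<close> reach y show ?thesis by (simp add: rank_less_if_walk_start_reaches_source)
  qed
qed

definition target_index :: "'k \<Rightarrow> 'k" where
  "target_index i = inv t (last (R i))"

lemma t_target_index: "t (target_index i) = last (R i)"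
  using last_walk_in_targets by (simp add: target_index_def f_inv_into_f)

lemma target_index_permutes: "target_index permutes UNIV"
proof (rule inj_imp_permutes)
  show "inj_on target_index UNIV"
  proof (rule inj_onI)
    fix i j assume "target_index i = target_index j"
    then have "last (R i) = last (R j)" using t_target_index by metis
    then show "i = j" using walk_nonempty walk_unique by (metis last_in_set)
  qed
qed simp_all

lemma reaches_hd_last: "reaches (hd (R i)) (last (R i))"
proof (cases "length (R i) = 1")
  case True
  then show ?thesis using walk_nonempty by (simp add: reaches_def hd_conv_nth last_conv_nth)
next
  case False
  then have "0 < length (R i) - 1" using walk_nonempty by (simp add: Suc_lessI)
  then show ?thesis unfolding reaches_def precedes_def
    using walk_nonempty
    by (metis diff_less hd_conv_nth last_conv_nth length_greater_0_conv zero_less_one)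
qed

lemma source_weight_diagonal: "source_weight H v v = 1"
proof -
  have "\<not> (walk_edge h v \<and> reaches v h)" for h
    using walk_edge_precedes precedes_trans precedes_irrefl unfolding reaches_def by blast
  then show ?thesis by (simp add: source_weight_def reaches_def)
qed

lemma det_criterion_matrix_nonzero:
  "det (\<chi> i j. phi edge_matrix error_cov $ s i $ t j
      - (\<Sum>h\<in>H i. phi edge_matrix error_cov $ h $ t j * edge_matrix $ h $ s i) :: real^'k^'k) \<noteq> 0"
  (is "det ?A \<noteq> 0")
proof (rule det_nonzero_if_triangular_after_permutation[OF target_index_permutes, where f = rank])
  define summand where "summand i j x y = source_weight (H i) (s i) x * error_cov $ x $ y
    * of_bool (reaches y (last (R j)))" for i j x y
  have entry: "?A $ i $ target_index j = (\<Sum>y\<in>UNIV. \<Sum>x\<in>UNIV. summand i j x y)" for i j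
    using criterion_matrix_entry by (simp add: t_target_index summand_def)
  have nonneg: "summand i j x y \<ge> 0" for i j x y
    by (simp add: summand_def source_weight_def error_cov_def)
  show "j = i \<or> rank j < rank i" if nonzero: "?A $ i $ target_index j \<noteq> 0" for i j
  proof -
    obtain y where "(\<Sum>x\<in>UNIV. summand i j x y) \<noteq> 0"
      using nonzero unfolding entry by (rule sum.not_neutral_contains_not_neutral)
    then obtain x where "summand i j x y \<noteq> 0" by (rule sum.not_neutral_contains_not_neutral)
    then have "source_weight (H i) (s i) x \<noteq> 0" "error_cov $ x $ y \<noteq> 0"
      "reaches y (last (R j))"
      by (simp_all add: summand_def)
    then have "reaches x (s i)" "x = y \<or> bidirected_top x y" "y \<in> set (R j)"
      by (simp_all add: source_weight_def error_cov_def reaches_last_walk split: if_splits)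
    then show ?thesis by (rule rank_decreases)
  qed
  show "?A $ i $ target_index i \<noteq> 0" for i
  proof -
    have "error_cov $ s i $ hd (R i) > 0"
      using walk_start[of i] source_not_on_own_walk[of i] walk_nonempty[of i]
      by (cases "b i") (auto simp: error_cov_def bidirected_top_def)
    then have "summand i i (s i) (hd (R i)) > 0"
      by (simp add: summand_def source_weight_diagonal reaches_hd_last)
    then have "(\<Sum>x\<in>UNIV. summand i i x (hd (R i))) > 0"
      using nonneg by (intro sum_pos2) auto
    then have "(\<Sum>y\<in>UNIV. \<Sum>x\<in>UNIV. summand i i x y) > 0"
      using nonneg by (intro sum_pos2[where f = "\<lambda>y. \<Sum>x\<in>UNIV. summand i i x y"] sum_nonneg) auto
    then show ?thesis unfolding entry by simp
  qed
qed

end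

theorem lemma4p2:
  fixes D B :: "('n::finite \<times> 'n) set"
    and s t :: "'k::finite \<Rightarrow> 'n"
    and H :: "'k \<Rightarrow> 'n set"
  assumes "mixed_graph D B"
    and "inj s" and "inj t"
    and "\<And>i. H i \<subseteq> pa D (s i)"
    and "\<exists>P. half_trek_system_nsi D B (range s) (range t) P"
  shows "\<exists>\<Lambda> \<Omega>. params D B \<Lambda> \<Omega> \<and>
           det (\<chi> i j. phi \<Lambda> \<Omega> $ s i $ t j
                 - (\<Sum>h\<in>H i. phi \<Lambda> \<Omega> $ h $ t j * \<Lambda> $ h $ s i) :: real^'k^'k) \<noteq> 0"
proof -
  (* The witness works for every H. *)
  interpret halftrek_sources D B s t using \<open>inj s\<close> by unfold_locales
  obtain P where "half_trek_system_nsi D B (range s) (range t) P" using assms(5) ..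
  then obtain b R where "walk_system b R" "\<And>i. distinct (R i)" "acyclic (source_hits b R)"
    by (rule exists_reduced_walk_system) blast
  then interpret reduced_walk_system D B s t b R by unfold_locales
  show ?thesis
    using params_witness[OF \<open>mixed_graph D B\<close>] det_criterion_matrix_nonzero by blast
qed

end
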